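(* Suppose that $S_N$ admits the weak global Edgeworth expansion of order $0$ for all $f\in F^1_0$, with leading polynomial $P_{0,g}\equiv1$ and asymptotic mean $A=0$, i.e. $\mathbb{E}(f(S_N))=\int\mathfrak{n}(z)f(z\sqrt{N})\,dz+C^1_0(f)\,o(N^{-1/2})$ with the $o$-term independent of $f$. Then for all $a<b$, $$\frac{\sqrt{N}}{b-a}\,\mathbb{P}\big(S_N\in(u+a,u+b)\big)=\frac{1}{\sqrt{2\pi\sigma^2}}e^{-\frac{u^2}{2N\sigma^2}}+o(1)$$ uniformly in $u\in\mathbb{R}$.
   Context: $X_1,X_2,\dots$ are real random variables, $S_N=\sum_{n=1}^N X_n$, $\sigma^2>0$, $\mathfrak{n}(y)=\frac{1}{\sqrt{2\pi\sigma^2}}e^{-y^2/(2\sigma^2)}$. $F^1_0$ is the space of continuously differentiable $f:\mathbb{R}\to\mathbb{C}$ with $C^1_0(f)=\max(\|f\|_{L^1},\|f'\|_{L^1})+\|f\|_{L^1}<\infty$. The asymptotic mean $A=\lim_N\mathbb{E}(S_N/N)$ is assumed to be $0$. *)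

theory Defs
  imports "HOL-Probability.Probability"
begin

definition gauss_dens :: "real \<Rightarrow> real \<Rightarrow> real" where
  "gauss_dens s2 y = exp (- (y^2) / (2 * s2)) / sqrt (2 * pi * s2)"

text \<open>Partial sums S_N = X_1 + ... + X_N (the sequence X is indexed from 1).\<close>
definition partial_sum :: "(nat \<Rightarrow> 'a \<Rightarrow> real) \<Rightarrow> nat \<Rightarrow> 'a \<Rightarrow> real" where
  "partial_sum X N \<omega> = (\<Sum>n=1..N. X n \<omega>)"

definition L1norm :: "(real \<Rightarrow> complex) \<Rightarrow> real" where
  "L1norm f = (LINT x|lborel. norm (f x))"

definition F10 :: "(real \<Rightarrow> complex) set" where
  "F10 = {f. f C1_differentiable_on UNIV \<and> integrable lborel f
             \<and> integrable lborel (\<lambda>x. vector_derivative f (at x))}"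

definition C10 :: "(real \<Rightarrow> complex) \<Rightarrow> real" where
  "C10 f = max (L1norm f) (L1norm (\<lambda>x. vector_derivative f (at x))) + L1norm f"

end

theory Submission
  imports Defs
begin

text \<open>Sandwich the indicator of \<open>(u + a, u + b)\<close> between two \<open>C\<^sup>1\<close> trapezoids (built from a
  quadratic spline ramp) that differ from it only on intervals of length \<open>2 d\<close>. The Edgeworth
  hypothesis applies to both trapezoids, with constants \<open>C\<^sub>0\<^sup>1\<close> that do not depend on \<open>u\<close> because
  this norm is translation invariant. The Gaussian integral of a trapezoid rescaled by \<open>\<surd>N\<close> equals
  its length times \<open>n(u/\<surd>N)/\<surd>N\<close> up to \<open>O(1/N)\<close>, because the Gaussian density \<open>n\<close> is Lipschitz.
  After normalisation the error is \<open>O(d) + O(1/\<surd>N) + o(1)\<close> uniformly in \<open>u\<close>, so one first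
  chooses \<open>d\<close> small and then \<open>N\<close> large.\<close>

lemma pos_part_sq_expansion:
  fixes t h :: real
  shows "\<bar>(max 0 (t + h))\<^sup>2 - (max 0 t)\<^sup>2 - 2 * max 0 t * h\<bar> \<le> h\<^sup>2"
proof (cases "t \<ge> 0"; cases "t + h \<ge> 0")
  assume "t \<ge> 0" "\<not> t + h \<ge> 0"
  then show ?thesis using mult_nonneg_nonpos[of t "t + 2 * h"] zero_le_square[of "t + h"]
    by (simp add: power2_eq_square algebra_simps)
next
  assume "\<not> t \<ge> 0" "t + h \<ge> 0"
  then show ?thesis using mult_mono[of "t + h" h "t + h" h] by (simp add: power2_eq_square)
qed (simp_all add: power2_eq_square algebra_simps)

lemma pos_part_sq_has_real_derivative:
  "((\<lambda>t. (max 0 t)\<^sup>2) has_real_derivative 2 * max 0 t) (at t)"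
proof -
  have slope: "\<bar>((max 0 (t + h))\<^sup>2 - (max 0 t)\<^sup>2) / h - 2 * max 0 t\<bar> \<le> \<bar>h\<bar>" if "h \<noteq> 0" for h :: real
  proof -
    have "((max 0 (t + h))\<^sup>2 - (max 0 t)\<^sup>2) / h - 2 * max 0 t
          = ((max 0 (t + h))\<^sup>2 - (max 0 t)\<^sup>2 - 2 * max 0 t * h) / h"
      using that by (simp add: diff_divide_distrib)
    also have "\<bar>\<dots>\<bar> \<le> h\<^sup>2 / \<bar>h\<bar>"
      unfolding abs_divide by (intro divide_right_mono pos_part_sq_expansion) simp
    also have "\<dots> = \<bar>h\<bar>"
      using that by (metis abs_mult_self_eq nonzero_mult_div_cancel_left abs_eq_0 power2_eq_square)
    finally show ?thesis .
  qed
  have "((\<lambda>h. ((max 0 (t + h))\<^sup>2 - (max 0 t)\<^sup>2) / h - 2 * max 0 t) \<longlongrightarrow> 0) (at 0)"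
  proof (rule Lim_null_comparison[where g = abs])
    show "((\<lambda>h. \<bar>h\<bar>) \<longlongrightarrow> 0) (at (0::real))"
      using tendsto_rabs_zero[OF tendsto_ident_at[of 0 UNIV]] by simp
  qed (use slope in \<open>auto simp: eventually_at_filter\<close>)
  then show ?thesis by (simp add: DERIV_def LIM_zero_iff)
qed

definition ramp :: "real \<Rightarrow> real" where
  "ramp s = ((max 0 s)\<^sup>2 - 2 * (max 0 (s - 1))\<^sup>2 + (max 0 (s - 2))\<^sup>2) / 2"

definition ramp' :: "real \<Rightarrow> real" where
  "ramp' s = max 0 s - 2 * max 0 (s - 1) + max 0 (s - 2)"

lemma ramp_has_real_derivative: "(ramp has_real_derivative ramp' s) (at s)"
proof -
  have shifted: "((\<lambda>s. (max 0 (s - c))\<^sup>2) has_real_derivative 2 * max 0 (s - c)) (at s)" for c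
    using DERIV_shift[of "\<lambda>t. (max 0 t)\<^sup>2" "2 * max 0 (s - c)" s "- c"]
      pos_part_sq_has_real_derivative[of "s - c"] by simp
  have "((\<lambda>s. ((max 0 s)\<^sup>2 - 2 * (max 0 (s - 1))\<^sup>2 + (max 0 (s - 2))\<^sup>2) / 2) has_real_derivative
      (2 * max 0 s - 2 * (2 * max 0 (s - 1)) + 2 * max 0 (s - 2)) / 2) (at s)"
    by (intro DERIV_cdivide DERIV_add DERIV_diff DERIV_cmult shifted pos_part_sq_has_real_derivative)
  then show ?thesis
    unfolding ramp_def[abs_def] ramp'_def by (rule DERIV_cong) (simp add: field_simps)
qed

lemma ramp_eq_0: "s \<le> 0 \<Longrightarrow> ramp s = 0"
  by (simp add: ramp_def)

lemma ramp_eq_1: "2 \<le> s \<Longrightarrow> ramp s = 1"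
  by (simp add: ramp_def power2_eq_square algebra_simps)

lemma ramp_bounds: "0 \<le> ramp s \<and> ramp s \<le> 1"
proof -
  consider "s \<le> 0" | "0 \<le> s" "s \<le> 1" | "1 \<le> s" "s \<le> 2" | "2 \<le> s" by linarith
  then show ?thesis
  proof cases
    case 2
    then have "s\<^sup>2 \<le> 1" by (simp add: power_le_one)
    moreover have "ramp s = s\<^sup>2 / 2" using 2 by (simp add: ramp_def)
    ultimately show ?thesis using zero_le_power2[of s] by linarith
  next
    case 3
    then have "(2 - s)\<^sup>2 \<le> 1" by (simp add: power_le_one)
    moreover have "ramp s = 1 - (2 - s)\<^sup>2 / 2"
      using 3 by (simp add: ramp_def power2_eq_square field_simps)
    ultimately show ?thesis using zero_le_power2[of "2 - s"] by linarith
  qed (auto simp: ramp_eq_0 ramp_eq_1)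
qed

lemma ramp'_eq_0: "s \<le> 0 \<or> 2 \<le> s \<Longrightarrow> ramp' s = 0"
  by (auto simp: ramp'_def)

lemma continuous_on_ramp': "continuous_on UNIV ramp'"
  unfolding ramp'_def[abs_def] by (intro continuous_intros)

definition trapezoid :: "real \<Rightarrow> real \<Rightarrow> real \<Rightarrow> real \<Rightarrow> real" where
  "trapezoid d p q x = ramp ((x - p) / d) - ramp ((x - q) / d)"

definition trapezoid' :: "real \<Rightarrow> real \<Rightarrow> real \<Rightarrow> real \<Rightarrow> real" where
  "trapezoid' d p q x = (ramp' ((x - p) / d) - ramp' ((x - q) / d)) / d"

lemma trapezoid_has_real_derivative:
  assumes "d > 0"
  shows "(trapezoid d p q has_real_derivative trapezoid' d p q x) (at x)"
proof -
  have "((\<lambda>x. ramp ((x - c) / d)) has_real_derivative ramp' ((x - c) / d) * (1 / d)) (at x)" for c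
    by (rule DERIV_chain2[OF ramp_has_real_derivative]) (use assms in \<open>auto intro!: derivative_eq_intros\<close>)
  from DERIV_diff[OF this this] show ?thesis
    unfolding trapezoid_def[abs_def] trapezoid'_def by (simp add: diff_divide_distrib)
qed

lemma continuous_on_trapezoid: "d > 0 \<Longrightarrow> continuous_on UNIV (trapezoid d p q)"
  using trapezoid_has_real_derivative by (meson DERIV_isCont continuous_at_imp_continuous_on)

lemma continuous_on_trapezoid': "d > 0 \<Longrightarrow> continuous_on UNIV (trapezoid' d p q)"
  unfolding trapezoid'_def[abs_def]
  by (intro continuous_intros continuous_on_compose2[OF continuous_on_ramp']) auto

context
  fixes d p q :: real
  assumes d: "d > 0" and pq: "p + 2 * d \<le> q"
begin

lemma trapezoid_bounds: "0 \<le> trapezoid d p q x \<and> trapezoid d p q x \<le> 1"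
proof (cases "x \<le> q")
  case True
  then have "(x - q) / d \<le> 0" using d by (simp add: divide_nonpos_pos)
  then show ?thesis using ramp_bounds[of "(x - p) / d"] by (simp add: trapezoid_def ramp_eq_0)
next
  case False
  then have "2 \<le> (x - p) / d" using d pq by (simp add: le_divide_eq)
  then show ?thesis using ramp_bounds[of "(x - q) / d"] by (simp add: trapezoid_def ramp_eq_1)
qed

lemma trapezoid_eq_1: "p + 2 * d \<le> x \<Longrightarrow> x \<le> q \<Longrightarrow> trapezoid d p q x = 1"
  using d by (simp add: trapezoid_def ramp_eq_0 ramp_eq_1 le_divide_eq divide_nonpos_pos)

lemma trapezoid_outside:
  assumes "x \<notin> {p<..<q + 2 * d}"
  shows "trapezoid d p q x = 0" and "trapezoid' d p q x = 0"
proof -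
  have "((x - p) / d \<le> 0 \<and> (x - q) / d \<le> 0) \<or> (2 \<le> (x - p) / d \<and> 2 \<le> (x - q) / d)"
    using assms d pq by (auto simp: le_divide_eq divide_nonpos_pos)
  then show "trapezoid d p q x = 0" and "trapezoid' d p q x = 0"
    by (auto simp: trapezoid_def trapezoid'_def ramp_eq_0 ramp_eq_1 ramp'_eq_0)
qed

end

lemma integrable_lborel_vanishing_outside:
  fixes f :: "real \<Rightarrow> 'b::{banach, second_countable_topology}"
  assumes "continuous_on UNIV f" and "\<And>x. x \<notin> {p..q} \<Longrightarrow> f x = 0"
  shows "integrable lborel f"
proof -
  have "integrable lborel (\<lambda>x. indicator {p..q} x *\<^sub>R f x)"
    by (rule borel_integrable_compact) (auto intro: continuous_on_subset[OF assms(1)])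
  moreover have "(\<lambda>x. indicator {p..q} x *\<^sub>R f x) = f"
    using assms(2) by (auto simp: indicator_def)
  ultimately show ?thesis by simp
qed

lemma L1norm_translate: "L1norm (\<lambda>x. f (x - c)) = L1norm f"
  unfolding L1norm_def
  using lborel_integral_real_affine[where c = 1 and t = c and f = "\<lambda>x. norm (f (x - c))"] by simp

lemma C10_translate:
  assumes "\<And>x. (f has_vector_derivative f' x) (at x)"
  shows "C10 (\<lambda>x. f (x - c)) = C10 f"
proof -
  have "((\<lambda>x. x - c) has_vector_derivative 1) (at x)" for x
    by (auto intro!: derivative_eq_intros)
  then have "((\<lambda>x. f (x - c)) has_vector_derivative f' (x - c)) (at x)" for x
    using vector_diff_chain_at[of "\<lambda>x. x - c" 1 x f "f' (x - c)"] assms by (simp add: o_def)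
  then have "vector_derivative (\<lambda>x. f (x - c)) (at x) = vector_derivative f (at (x - c))" for x
    using vector_derivative_at[OF assms[of "x - c"]] by (simp add: vector_derivative_at)
  then show ?thesis
    unfolding C10_def by (simp add: L1norm_translate[where f = f]
        L1norm_translate[where f = "\<lambda>x. vector_derivative f (at x)"])
qed

context
  fixes d p q :: real
  assumes d: "d > 0" and pq: "p + 2 * d \<le> q"
begin

lemma trapezoid_in_F10: "(\<lambda>x. complex_of_real (trapezoid d p q x)) \<in> F10"
proof -
  have deriv: "((\<lambda>x. complex_of_real (trapezoid d p q x)) has_vector_derivative
      complex_of_real (trapezoid' d p q x)) (at x)" for x
    using trapezoid_has_real_derivative[OF d] by (simp add: has_vector_derivative_of_real)
  have cont: "continuous_on UNIV (\<lambda>x. complex_of_real (trapezoid' d p q x))"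
    by (intro continuous_intros continuous_on_trapezoid' d)
  show ?thesis
    unfolding F10_def C1_differentiable_on_def mem_Collect_eq vector_derivative_at[OF deriv]
  proof (intro conjI exI ballI)
    show "integrable lborel (\<lambda>x. complex_of_real (trapezoid d p q x))"
      using trapezoid_outside[OF d pq]
      by (intro integrable_lborel_vanishing_outside[where p = p and q = "q + 2 * d"]
          continuous_intros continuous_on_trapezoid d) auto
    show "integrable lborel (\<lambda>x. complex_of_real (trapezoid' d p q x))"
      using trapezoid_outside[OF d pq]
      by (intro integrable_lborel_vanishing_outside[where p = p and q = "q + 2 * d"] cont) auto
  qed (use deriv cont in auto)
qed

lemma C10_trapezoid:
  "C10 (\<lambda>x. complex_of_real (trapezoid d p q x)) = C10 (\<lambda>x. complex_of_real (trapezoid d 0 (q - p) x))"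
proof -
  have shift: "(\<lambda>x. complex_of_real (trapezoid d p q x)) = (\<lambda>x. complex_of_real (trapezoid d 0 (q - p) (x - p)))"
    by (simp add: trapezoid_def algebra_simps)
  have deriv: "((\<lambda>x. complex_of_real (trapezoid d 0 (q - p) x)) has_vector_derivative
      complex_of_real (trapezoid' d 0 (q - p) x)) (at x)" for x
    using trapezoid_has_real_derivative[OF d] by (simp add: has_vector_derivative_of_real)
  show ?thesis
    unfolding shift by (rule C10_translate[OF deriv])
qed

end

lemma gauss_dens_nonneg: "0 < v \<Longrightarrow> 0 \<le> gauss_dens v y"
  by (simp add: gauss_dens_def)

lemma gauss_dens_le: "0 < v \<Longrightarrow> gauss_dens v y \<le> 1 / sqrt (2 * pi * v)"
  by (simp add: gauss_dens_def divide_right_mono divide_nonpos_pos)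

lemma continuous_on_gauss_dens: "0 < v \<Longrightarrow> continuous_on UNIV (gauss_dens v)"
  unfolding gauss_dens_def[abs_def] by (intro continuous_intros) auto

lemma gauss_dens_has_real_derivative:
  assumes "0 < v"
  shows "(gauss_dens v has_real_derivative - (y / v) * gauss_dens v y) (at y)"
  unfolding gauss_dens_def[abs_def] using assms
  by (auto intro!: derivative_eq_intros simp: field_simps)

lemma abs_mult_exp_neg_square_le:
  fixes v y :: real
  assumes "0 < v"
  shows "\<bar>y\<bar> * exp (- (y\<^sup>2) / (2 * v)) \<le> 1 + 2 * v"
proof -
  define q where "q = y\<^sup>2 / (2 * v)"
  have q: "0 \<le> q" using assms by (simp add: q_def)
  have "\<bar>y\<bar> \<le> 1 + y\<^sup>2"
  proof (cases "\<bar>y\<bar> \<le> 1")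
    case False
    then have "\<bar>y\<bar> * 1 \<le> \<bar>y\<bar> * \<bar>y\<bar>" by (intro mult_left_mono) auto
    then show ?thesis by (simp add: power2_eq_square)
  qed (use zero_le_power2[of y] in linarith)
  also have "\<dots> = 1 + 2 * v * q" using assms by (simp add: q_def)
  also have "\<dots> \<le> (1 + 2 * v) * (1 + q)" using assms q by (simp add: algebra_simps)
  finally have "\<bar>y\<bar> * exp (- q) \<le> (1 + 2 * v) * ((1 + q) * exp (- q))"
    by (simp add: mult_right_mono)
  also have "(1 + q) * exp (- q) \<le> 1"
    using exp_ge_add_one_self[of q] by (simp add: exp_minus field_simps)
  finally show ?thesis using assms by (simp add: q_def)
qed

lemma gauss_dens_lipschitz:
  assumes "0 < v"
  shows "((1 + 2 * v) / (v * sqrt (2 * pi * v)))-lipschitz_on UNIV (gauss_dens v)"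
proof (rule lipschitz_onI)
  have bound: "\<bar>- (y / v) * gauss_dens v y\<bar> \<le> (1 + 2 * v) / (v * sqrt (2 * pi * v))" for y
    using abs_mult_exp_neg_square_le[OF assms, of y] assms
    by (simp add: gauss_dens_def abs_mult divide_right_mono flip: divide_divide_eq_left)
  show "dist (gauss_dens v x) (gauss_dens v y) \<le> (1 + 2 * v) / (v * sqrt (2 * pi * v)) * dist x y"
    for x y
    unfolding dist_real_def real_norm_def[symmetric]
    by (rule field_differentiable_bound[of UNIV _ "\<lambda>y. - (y / v) * gauss_dens v y"])
      (use gauss_dens_has_real_derivative[OF assms] bound in auto)
  show "0 \<le> (1 + 2 * v) / (v * sqrt (2 * pi * v))" using assms by simp
qed

lemma mem_Icc_divide_iff: "0 < s \<Longrightarrow> z \<in> {p / s..q / s} \<longleftrightarrow> z * s \<in> {p..q}"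
  for s p q z :: real
  by (simp add: pos_divide_le_eq pos_le_divide_eq)

lemma integrable_gauss_dens_scaled:
  fixes h :: "real \<Rightarrow> real"
  assumes "0 < v" "0 < s" "continuous_on UNIV h" "\<And>x. x \<notin> {p..q} \<Longrightarrow> h x = 0"
  shows "integrable lborel (\<lambda>z. gauss_dens v z * h (z * s))"
proof (rule integrable_lborel_vanishing_outside[where p = "p / s" and q = "q / s"])
  show "continuous_on UNIV (\<lambda>z. gauss_dens v z * h (z * s))"
    by (intro continuous_intros continuous_on_gauss_dens assms(1)
        continuous_on_compose2[OF assms(3)]) auto
  show "gauss_dens v z * h (z * s) = 0" if "z \<notin> {p / s..q / s}" for z
    using that assms(4)[of "z * s"] mem_Icc_divide_iff[OF assms(2), of z p q] by (metis mult_zero_right)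
qed

lemma gauss_dens_scaled_near:
  assumes "0 < s" "L-lipschitz_on UNIV (gauss_dens v)" "\<bar>z * s - u\<bar> \<le> W"
  shows "\<bar>gauss_dens v z - gauss_dens v (u / s)\<bar> \<le> L * W / s"
proof -
  have "\<bar>z - u / s\<bar> = \<bar>z * s - u\<bar> / s"
    using assms(1) by (simp add: field_simps)
  then have "\<bar>z - u / s\<bar> \<le> W / s"
    using assms by (simp add: divide_right_mono)
  then have "L * \<bar>z - u / s\<bar> \<le> L * (W / s)"
    using lipschitz_on_nonneg[OF assms(2)] by (rule mult_left_mono)
  with lipschitz_onD[OF assms(2), of z "u / s"] show ?thesis
    by (simp add: dist_real_def)
qed

context
  fixes v s L :: real and h :: "real \<Rightarrow> real"
  assumes v: "0 < v" and s: "0 < s" and L: "L-lipschitz_on UNIV (gauss_dens v)"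
    and h: "continuous_on UNIV h"
begin

lemma integral_gauss_dens_scaled_le:
  assumes "\<And>x. h x \<le> 1" "\<And>x. x \<notin> {p..q} \<Longrightarrow> h x = 0" "p \<le> q"
    and "\<And>x. x \<in> {p..q} \<Longrightarrow> \<bar>x - u\<bar> \<le> W"
  shows "(LINT z|lborel. gauss_dens v z * h (z * s)) \<le> (q - p) / s * (gauss_dens v (u / s) + L * W / s)"
proof -
  let ?c = "gauss_dens v (u / s) + L * W / s"
  have "(LINT z|lborel. gauss_dens v z * h (z * s)) \<le> (LINT z|lborel. indicator {p / s..q / s} z * ?c)"
  proof (rule integral_mono)
    show "integrable lborel (\<lambda>z. gauss_dens v z * h (z * s))"
      by (rule integrable_gauss_dens_scaled[OF v s h assms(2)])
    show "integrable lborel (\<lambda>z. indicator {p / s..q / s} z * ?c)"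
      by (intro integrable_mult_left) (simp add: integrable_indicator_iff emeasure_lborel_Icc_eq)
  next
    fix z
    show "gauss_dens v z * h (z * s) \<le> indicator {p / s..q / s} z * ?c"
    proof (cases "z * s \<in> {p..q}")
      case True
      have "gauss_dens v z * h (z * s) \<le> gauss_dens v z"
        using assms(1)[of "z * s"] gauss_dens_nonneg[OF v, of z] by (simp add: mult_left_le)
      also have "\<dots> \<le> ?c"
        using gauss_dens_scaled_near[OF s L assms(4)[OF True]] by simp
      finally show ?thesis using True mem_Icc_divide_iff[OF s] by simp
    next
      case False
      then have "z \<notin> {p / s..q / s}" using mem_Icc_divide_iff[OF s] by blast
      then show ?thesis using False assms(2) by simp
    qed
  qed
  also have "\<dots> = (q - p) / s * ?c"
    using assms(3) s by (simp add: divide_right_mono diff_divide_distrib)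
  finally show ?thesis .
qed

lemma integral_gauss_dens_scaled_ge:
  assumes "integrable lborel (\<lambda>z. gauss_dens v z * h (z * s))" "\<And>x. 0 \<le> h x"
    and "\<And>x. x \<in> {p..q} \<Longrightarrow> h x = 1" "p \<le> q" "\<And>x. x \<in> {p..q} \<Longrightarrow> \<bar>x - u\<bar> \<le> W"
  shows "(q - p) / s * (gauss_dens v (u / s) - L * W / s) \<le> (LINT z|lborel. gauss_dens v z * h (z * s))"
proof -
  let ?c = "gauss_dens v (u / s) - L * W / s"
  have "(q - p) / s * ?c = (LINT z|lborel. indicator {p / s..q / s} z * ?c)"
    using assms(4) s by (simp add: divide_right_mono diff_divide_distrib)
  also have "\<dots> \<le> (LINT z|lborel. gauss_dens v z * h (z * s))"
  proof (rule integral_mono[OF _ assms(1)])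
    show "integrable lborel (\<lambda>z. indicator {p / s..q / s} z * ?c)"
      by (intro integrable_mult_left) (simp add: integrable_indicator_iff emeasure_lborel_Icc_eq)
  next
    fix z
    show "indicator {p / s..q / s} z * ?c \<le> gauss_dens v z * h (z * s)"
    proof (cases "z * s \<in> {p..q}")
      case True
      then show ?thesis
        using gauss_dens_scaled_near[OF s L assms(5)[OF True]] assms(3)[OF True] mem_Icc_divide_iff[OF s]
        by simp
    next
      case False
      then have "z \<notin> {p / s..q / s}" using mem_Icc_divide_iff[OF s] by blast
      then show ?thesis using assms(2) gauss_dens_nonneg[OF v] by simp
    qed
  qed
  finally show ?thesis .
qed

end

context prob_space
begin

lemma prob_eq_expectation_indicator:
  assumes "Y \<in> borel_measurable M" "A \<in> sets borel"
  shows "prob {\<omega> \<in> space M. Y \<omega> \<in> A} = expectation (\<lambda>\<omega>. indicator A (Y \<omega>))"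
proof -
  have "prob {\<omega> \<in> space M. Y \<omega> \<in> A} = expectation (indicator {\<omega> \<in> space M. Y \<omega> \<in> A})"
    by (simp add: Int_absorb2 subset_iff)
  also have "\<dots> = expectation (\<lambda>\<omega>. indicator A (Y \<omega>))"
    by (rule Bochner_Integration.integral_cong) (auto simp: indicator_def)
  finally show ?thesis .
qed

lemma integrable_bounded_comp:
  fixes h :: "real \<Rightarrow> real"
  assumes "Y \<in> borel_measurable M" "h \<in> borel_measurable borel" "\<And>x. \<bar>h x\<bar> \<le> 1"
  shows "integrable M (\<lambda>\<omega>. h (Y \<omega>))"
  using assms by (intro integrable_const_bound[where B = 1]) auto

lemma prob_le_expectation:
  fixes h :: "real \<Rightarrow> real"
  assumes "Y \<in> borel_measurable M" "A \<in> sets borel" "h \<in> borel_measurable borel"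
    and "\<And>x. indicator A x \<le> h x" "\<And>x. h x \<le> 1"
  shows "prob {\<omega> \<in> space M. Y \<omega> \<in> A} \<le> expectation (\<lambda>\<omega>. h (Y \<omega>))"
proof -
  have "\<bar>h x\<bar> \<le> 1" for x
    using assms(4,5)[of x] by (cases "x \<in> A") auto
  then show ?thesis
    unfolding prob_eq_expectation_indicator[OF assms(1,2)] using assms
    by (intro integral_mono integrable_bounded_comp) (auto simp: indicator_def)
qed

lemma expectation_le_prob:
  fixes h :: "real \<Rightarrow> real"
  assumes "Y \<in> borel_measurable M" "A \<in> sets borel" "h \<in> borel_measurable borel"
    and "\<And>x. 0 \<le> h x" "\<And>x. h x \<le> indicator A x"
  shows "expectation (\<lambda>\<omega>. h (Y \<omega>)) \<le> prob {\<omega> \<in> space M. Y \<omega> \<in> A}"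
proof -
  have "\<bar>h x\<bar> \<le> 1" for x
    using assms(4,5)[of x] by (cases "x \<in> A") auto
  then show ?thesis
    unfolding prob_eq_expectation_indicator[OF assms(1,2)] using assms
    by (intro integral_mono integrable_bounded_comp) (auto simp: indicator_def)
qed

end

text \<open>The expansion hypothesis at a single time \<open>N\<close>, for \<open>S = S\<^sub>N\<close> and \<open>s = \<surd>N\<close>.\<close>

definition weak_edgeworth0 :: "'a measure \<Rightarrow> real \<Rightarrow> ('a \<Rightarrow> real) \<Rightarrow> real \<Rightarrow> real \<Rightarrow> bool" where
  "weak_edgeworth0 M v S s r \<longleftrightarrow> (\<forall>f\<in>F10.
     cmod ((LINT \<omega>|M. f (S \<omega>)) - (LINT z|lborel. complex_of_real (gauss_dens v z) * f (z * s)))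
       \<le> C10 f * r)"

lemma C10_nonneg: "0 \<le> C10 f"
  by (simp add: C10_def L1norm_def add_nonneg_nonneg le_max_iff_disj)

lemma trapezoid_expectation_approx:
  assumes "weak_edgeworth0 M v S s r" "0 < d" "p + 2 * d \<le> q"
  shows "\<bar>(LINT \<omega>|M. trapezoid d p q (S \<omega>)) - (LINT z|lborel. gauss_dens v z * trapezoid d p q (z * s))\<bar>
    \<le> C10 (\<lambda>x. complex_of_real (trapezoid d 0 (q - p) x)) * r"
proof -
  have "cmod ((LINT \<omega>|M. complex_of_real (trapezoid d p q (S \<omega>)))
      - (LINT z|lborel. complex_of_real (gauss_dens v z) * complex_of_real (trapezoid d p q (z * s))))
    \<le> C10 (\<lambda>x. complex_of_real (trapezoid d p q x)) * r"
    using assms(1) trapezoid_in_F10[OF assms(2,3)] unfolding weak_edgeworth0_def by fast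
  then show ?thesis
    unfolding of_real_mult[symmetric] integral_complex_of_real of_real_diff[symmetric] norm_of_real
      C10_trapezoid[OF assms(2,3)] .
qed

lemma prob_interval_upper:
  assumes M: "prob_space M" and S: "S \<in> borel_measurable M" and v: "0 < v" and s: "0 < s"
    and L: "L-lipschitz_on UNIV (gauss_dens v)" and E: "weak_edgeworth0 M v S s r"
    and d: "0 < d" and ab: "a < b"
  shows "s * measure M {\<omega> \<in> space M. S \<omega> \<in> {u + a<..<u + b}}
    \<le> (b - a + 4 * d) * (gauss_dens v (u / s) + L * (\<bar>a\<bar> + \<bar>b\<bar> + 2 * d) / s)
      + C10 (\<lambda>x. complex_of_real (trapezoid d 0 (b - a + 2 * d) x)) * r * s"
proof -
  define p q where "p = u + a - 2 * d" and "q = u + b"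
  define g where "g = gauss_dens v (u / s) + L * (\<bar>a\<bar> + \<bar>b\<bar> + 2 * d) / s"
  define K where "K = C10 (\<lambda>x. complex_of_real (trapezoid d 0 (b - a + 2 * d) x))"
  have pq: "p + 2 * d \<le> q" using ab by (simp add: p_def q_def)
  have "measure M {\<omega> \<in> space M. S \<omega> \<in> {u + a<..<u + b}} \<le> (LINT \<omega>|M. trapezoid d p q (S \<omega>))"
  proof (rule prob_space.prob_le_expectation[OF M S])
    show "trapezoid d p q \<in> borel_measurable borel"
      by (rule borel_measurable_continuous_onI[OF continuous_on_trapezoid[OF d]])
    show "indicator {u + a<..<u + b} x \<le> trapezoid d p q x" for x
      using trapezoid_eq_1[OF d pq, of x] trapezoid_bounds[OF d pq, of x]
      by (auto simp: indicator_def p_def q_def)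
  qed (use trapezoid_bounds[OF d pq] in auto)
  also have "\<dots> \<le> (LINT z|lborel. gauss_dens v z * trapezoid d p q (z * s)) + K * r"
    using trapezoid_expectation_approx[OF E d pq] by (simp add: K_def p_def q_def abs_le_iff algebra_simps)
  also have "(LINT z|lborel. gauss_dens v z * trapezoid d p q (z * s)) \<le> (q + 2 * d - p) / s * g"
    unfolding g_def
  proof (rule integral_gauss_dens_scaled_le[OF v s L continuous_on_trapezoid[OF d]])
    show "trapezoid d p q x = 0" if "x \<notin> {p..q + 2 * d}" for x
      using that trapezoid_outside[OF d pq, of x] by auto
    show "\<bar>x - u\<bar> \<le> \<bar>a\<bar> + \<bar>b\<bar> + 2 * d" if "x \<in> {p..q + 2 * d}" for x
      using that d by (auto simp: p_def q_def abs_le_iff)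
  qed (use trapezoid_bounds[OF d pq] pq d in auto)
  also have "q + 2 * d - p = b - a + 4 * d" by (simp add: p_def q_def)
  finally have "s * measure M {\<omega> \<in> space M. S \<omega> \<in> {u + a<..<u + b}} \<le> s * ((b - a + 4 * d) / s * g + K * r)"
    using s by simp
  also have "\<dots> = (b - a + 4 * d) * g + K * r * s"
    using s by (simp add: field_simps)
  finally show ?thesis unfolding g_def K_def .
qed

lemma prob_interval_lower:
  assumes M: "prob_space M" and S: "S \<in> borel_measurable M" and v: "0 < v" and s: "0 < s"
    and L: "L-lipschitz_on UNIV (gauss_dens v)" and E: "weak_edgeworth0 M v S s r"
    and d: "0 < d" and abd: "4 * d \<le> b - a"
  shows "(b - a - 4 * d) * (gauss_dens v (u / s) - L * (\<bar>a\<bar> + \<bar>b\<bar> + 2 * d) / s)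
      - C10 (\<lambda>x. complex_of_real (trapezoid d 0 (b - a - 2 * d) x)) * r * s
    \<le> s * measure M {\<omega> \<in> space M. S \<omega> \<in> {u + a<..<u + b}}"
proof -
  define p q where "p = u + a" and "q = u + b - 2 * d"
  define g where "g = gauss_dens v (u / s) - L * (\<bar>a\<bar> + \<bar>b\<bar> + 2 * d) / s"
  define K where "K = C10 (\<lambda>x. complex_of_real (trapezoid d 0 (b - a - 2 * d) x))"
  have pq: "p + 2 * d \<le> q" using abd by (simp add: p_def q_def)
  have "(b - a - 4 * d) / s * g = (q - (p + 2 * d)) / s * g" by (simp add: p_def q_def)
  also have "\<dots> \<le> (LINT z|lborel. gauss_dens v z * trapezoid d p q (z * s))"
    unfolding g_def
  proof (rule integral_gauss_dens_scaled_ge[OF v s L continuous_on_trapezoid[OF d]])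
    show "integrable lborel (\<lambda>z. gauss_dens v z * trapezoid d p q (z * s))"
      using trapezoid_outside[OF d pq]
      by (intro integrable_gauss_dens_scaled[OF v s continuous_on_trapezoid[OF d],
            where p = p and q = "q + 2 * d"]) auto
    show "\<bar>x - u\<bar> \<le> \<bar>a\<bar> + \<bar>b\<bar> + 2 * d" if "x \<in> {p + 2 * d..q}" for x
      using that d by (auto simp: p_def q_def abs_le_iff)
  qed (use trapezoid_bounds[OF d pq] trapezoid_eq_1[OF d pq] pq in auto)
  also have "\<dots> \<le> (LINT \<omega>|M. trapezoid d p q (S \<omega>)) + K * r"
    using trapezoid_expectation_approx[OF E d pq] by (simp add: K_def p_def q_def abs_le_iff algebra_simps)
  also have "(LINT \<omega>|M. trapezoid d p q (S \<omega>)) \<le> measure M {\<omega> \<in> space M. S \<omega> \<in> {u + a<..<u + b}}"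
  proof (rule prob_space.expectation_le_prob[OF M S])
    show "trapezoid d p q \<in> borel_measurable borel"
      by (rule borel_measurable_continuous_onI[OF continuous_on_trapezoid[OF d]])
    show "trapezoid d p q x \<le> indicator {u + a<..<u + b} x" for x
      using trapezoid_outside(1)[OF d pq, of x] trapezoid_bounds[OF d pq, of x]
      by (auto simp: indicator_def p_def q_def)
  qed (use trapezoid_bounds[OF d pq] in auto)
  finally have "s * ((b - a - 4 * d) / s * g - K * r) \<le> s * measure M {\<omega> \<in> space M. S \<omega> \<in> {u + a<..<u + b}}"
    using s by simp
  moreover have "s * ((b - a - 4 * d) / s * g - K * r) = (b - a - 4 * d) * g - K * r * s"
    using s by (simp add: field_simps)
  ultimately show ?thesis unfolding g_def K_def by simp
qed

lemma local_limit_estimate: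
  assumes M: "prob_space M" and S: "S \<in> borel_measurable M" and v: "0 < v" and s: "0 < s"
    and L: "L-lipschitz_on UNIV (gauss_dens v)" and E: "weak_edgeworth0 M v S s r"
    and d: "0 < d" and abd: "4 * d \<le> b - a"
  shows "\<bar>s / (b - a) * measure M {\<omega> \<in> space M. S \<omega> \<in> {u + a<..<u + b}} - gauss_dens v (u / s)\<bar>
    \<le> (4 * d / sqrt (2 * pi * v) + (b - a + 4 * d) * (L * (\<bar>a\<bar> + \<bar>b\<bar> + 2 * d) / s)
        + (C10 (\<lambda>x. complex_of_real (trapezoid d 0 (b - a + 2 * d) x))
          + C10 (\<lambda>x. complex_of_real (trapezoid d 0 (b - a - 2 * d) x))) * \<bar>r * s\<bar>) / (b - a)"
proof -
  define P where "P = measure M {\<omega> \<in> space M. S \<omega> \<in> {u + a<..<u + b}}"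
  define g where "g = gauss_dens v (u / s)"
  define X where "X = L * (\<bar>a\<bar> + \<bar>b\<bar> + 2 * d) / s"
  define Kp where "Kp = C10 (\<lambda>x. complex_of_real (trapezoid d 0 (b - a + 2 * d) x))"
  define Km where "Km = C10 (\<lambda>x. complex_of_real (trapezoid d 0 (b - a - 2 * d) x))"
  have X: "0 \<le> X" using lipschitz_on_nonneg[OF L] s d by (simp add: X_def)
  have g: "4 * d * g \<le> 4 * d / sqrt (2 * pi * v)"
    using mult_left_mono[OF gauss_dens_le[OF v, of "u / s"], of "4 * d"] d by (simp add: g_def)
  have Kp: "Kp * (r * s) \<le> Kp * \<bar>r * s\<bar>"
    unfolding Kp_def by (intro mult_left_mono C10_nonneg abs_ge_self)
  have Km: "- (Km * (r * s)) \<le> Km * \<bar>r * s\<bar>"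
    using mult_left_mono[OF abs_ge_minus_self C10_nonneg] by (simp add: Km_def)
  have "s * P \<le> (b - a + 4 * d) * (g + X) + Kp * (r * s)"
    using prob_interval_upper[OF M S v s L E d, of a b u] abd d
    by (simp add: P_def g_def X_def Kp_def mult.assoc)
  also have "(b - a + 4 * d) * (g + X) = (b - a) * g + 4 * d * g + (b - a + 4 * d) * X"
    by (simp add: algebra_simps)
  finally have up: "s * P \<le> (b - a) * g + 4 * d * g + (b - a + 4 * d) * X + Kp * (r * s)" .
  have "(b - a) * g - 4 * d * g - (b - a - 4 * d) * X = (b - a - 4 * d) * (g - X)"
    by (simp add: algebra_simps)
  also have "\<dots> - Km * (r * s) \<le> s * P"
    using prob_interval_lower[OF M S v s L E d abd, of u]
    by (simp add: P_def g_def X_def Km_def mult.assoc)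
  finally have lo: "(b - a) * g - 4 * d * g - (b - a - 4 * d) * X - Km * (r * s) \<le> s * P" .
  have X_mono: "(b - a - 4 * d) * X \<le> (b - a + 4 * d) * X"
    using X d by (intro mult_right_mono) auto
  have K_nonneg: "0 \<le> Kp * \<bar>r * s\<bar>" "0 \<le> Km * \<bar>r * s\<bar>"
    unfolding Kp_def Km_def by (simp_all add: C10_nonneg)
  have "\<bar>s * P - (b - a) * g\<bar>
      \<le> 4 * d / sqrt (2 * pi * v) + (b - a + 4 * d) * X + (Kp + Km) * \<bar>r * s\<bar>"
    using up lo g Kp Km X_mono K_nonneg distrib_right[of Kp Km "\<bar>r * s\<bar>"]
    by (intro abs_leI) linarith+
  moreover have "\<bar>s / (b - a) * P - g\<bar> = \<bar>s * P - (b - a) * g\<bar> / (b - a)"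
    using abd d by (simp add: field_simps)
  ultimately show ?thesis
    using abd d by (simp add: P_def g_def X_def Kp_def Km_def divide_right_mono)
qed

lemma error_terms_tendsto_0:
  assumes "(\<lambda>N. r N * sqrt (real N)) \<longlonglongrightarrow> 0"
  shows "(\<lambda>N. C / sqrt (real N) + K * \<bar>r N * sqrt (real N)\<bar>) \<longlonglongrightarrow> 0"
proof -
  have "(\<lambda>N. C / sqrt (real N)) \<longlonglongrightarrow> 0"
    by (intro tendsto_divide_0[OF tendsto_const] filterlim_at_top_imp_at_infinity
        filterlim_compose[OF sqrt_at_top filterlim_real_sequentially])
  moreover have "(\<lambda>N. K * \<bar>r N * sqrt (real N)\<bar>) \<longlonglongrightarrow> 0"
    using tendsto_mult_right_zero[OF tendsto_rabs_zero[OF assms]] .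
  ultimately show ?thesis using tendsto_add_zero by blast
qed

lemma eventually_local_limit:
  assumes M: "prob_space M" and S: "\<And>N. S N \<in> borel_measurable M" and v: "0 < v"
    and r: "(\<lambda>N. r N * sqrt (real N)) \<longlonglongrightarrow> 0"
    and E: "\<forall>\<^sub>F N in sequentially. weak_edgeworth0 M v (S N) (sqrt (real N)) (r N)"
    and ab: "a < b" and e: "0 < e"
  shows "\<forall>\<^sub>F N in sequentially. \<forall>u. \<bar>sqrt (real N) / (b - a)
      * measure M {\<omega> \<in> space M. S N \<omega> \<in> {u + a<..<u + b}} - gauss_dens v (u / sqrt (real N))\<bar> \<le> e"
proof -
  define L where "L = (1 + 2 * v) / (v * sqrt (2 * pi * v))"
  define d where "d = min ((b - a) / 4) (e * (b - a) * sqrt (2 * pi * v) / 8)"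
  have d: "0 < d" "4 * d \<le> b - a" "4 * d / sqrt (2 * pi * v) \<le> e * (b - a) / 2"
    using e v ab by (auto simp: d_def min_def divide_simps)
  define C where "C = (b - a + 4 * d) * (L * (\<bar>a\<bar> + \<bar>b\<bar> + 2 * d))"
  define K where "K = C10 (\<lambda>x. complex_of_real (trapezoid d 0 (b - a + 2 * d) x))
    + C10 (\<lambda>x. complex_of_real (trapezoid d 0 (b - a - 2 * d) x))"
  have "\<forall>\<^sub>F N in sequentially. C / sqrt (real N) + K * \<bar>r N * sqrt (real N)\<bar> < e * (b - a) / 2"
    by (rule order_tendstoD(2)[OF error_terms_tendsto_0[OF r]]) (use e ab in simp)
  with E eventually_gt_at_top[of 0] show ?thesis
  proof eventually_elim
    case (elim N)
    define s where "s = sqrt (real N)"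
    have s: "0 < s" using elim(2) by (simp add: s_def)
    have "(b - a + 4 * d) * (L * (\<bar>a\<bar> + \<bar>b\<bar> + 2 * d) / s) = C / s"
      by (simp add: C_def)
    then have "\<bar>s / (b - a) * measure M {\<omega> \<in> space M. S N \<omega> \<in> {u + a<..<u + b}} - gauss_dens v (u / s)\<bar>
      \<le> (4 * d / sqrt (2 * pi * v) + (C / s + K * \<bar>r N * s\<bar>)) / (b - a)" for u
      using local_limit_estimate[OF M S v s gauss_dens_lipschitz[OF v] elim(1)[folded s_def] d(1,2), of u]
      by (simp add: L_def K_def add.assoc)
    also have "\<dots> \<le> (e * (b - a) / 2 + e * (b - a) / 2) / (b - a)"
      using d(3) elim(3) ab unfolding s_def by (intro divide_right_mono) linarith+
    also have "\<dots> = e" using ab by simp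
    finally show ?case by (simp add: s_def)
  qed
qed

lemma gauss_dens_div_sqrt:
  "0 \<le> N \<Longrightarrow> gauss_dens v (u / sqrt N) = exp (- (u\<^sup>2) / (2 * N * v)) / sqrt (2 * pi * v)"
  by (simp add: gauss_dens_def power_divide mult.assoc)

theorem corollary5p1:
  fixes M :: "'a measure" and X :: "nat \<Rightarrow> 'a \<Rightarrow> real" and sigma2 :: real
  assumes "prob_space M"
    and "\<And>n. X n \<in> borel_measurable M"
    and "\<And>n. integrable M (X n)"
    and "sigma2 > 0"
    and "(\<lambda>N. (LINT \<omega>|M. partial_sum X N \<omega>) / real N) \<longlonglongrightarrow> 0"
    and "\<exists>r :: nat \<Rightarrow> real. ((\<lambda>N. r N * sqrt (real N)) \<longlonglongrightarrow> 0) \<and>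
           (\<forall>\<^sub>F N in sequentially. \<forall>f\<in>F10.
              cmod ((LINT \<omega>|M. f (partial_sum X N \<omega>))
                    - (LINT z|lborel. complex_of_real (gauss_dens sigma2 z) * f (z * sqrt (real N))))
              \<le> C10 f * r N)"
    and "a < b"
  shows "\<forall>e>0. \<forall>\<^sub>F N in sequentially. \<forall>u::real.
           \<bar>sqrt (real N) / (b - a) * measure M {\<omega>\<in>space M. partial_sum X N \<omega> \<in> {u+a<..<u+b}}
            - exp (- (u^2) / (2 * real N * sigma2)) / sqrt (2 * pi * sigma2)\<bar> \<le> e"
proof (intro allI impI)
  fix e :: real
  assume e: "e > 0"
  obtain r where r: "(\<lambda>N. r N * sqrt (real N)) \<longlonglongrightarrow> 0"
    and E: "\<forall>\<^sub>F N in sequentially. weak_edgeworth0 M sigma2 (partial_sum X N) (sqrt (real N)) (r N)"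
    using assms(6) unfolding weak_edgeworth0_def by blast
  have S: "partial_sum X N \<in> borel_measurable M" for N
    unfolding partial_sum_def[abs_def] by (intro borel_measurable_sum assms(2))
  from eventually_local_limit[OF assms(1) S assms(4) r E assms(7) e]
  show "\<forall>\<^sub>F N in sequentially. \<forall>u. \<bar>sqrt (real N) / (b - a)
      * measure M {\<omega> \<in> space M. partial_sum X N \<omega> \<in> {u + a<..<u + b}}
      - exp (- (u\<^sup>2) / (2 * real N * sigma2)) / sqrt (2 * pi * sigma2)\<bar> \<le> e"
    by (simp add: gauss_dens_div_sqrt)
qed

end
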